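(* For fixed $\xi\in[0,e^{h\tau}]$, regard $G(\xi;\beta)$ as a set-valued function of $\beta\in[0,1]$. If $\theta^*(0)>0$ then $\beta\mapsto G(\xi;\beta)$ is non-decreasing, and if $\theta^*(0)<0$ then $\beta\mapsto G(\xi;\beta)$ is non-increasing, where a set-valued map $f$ is non-decreasing (resp. non-increasing) if $b_1<b_2$ implies $f_1\le f_2$ (resp. $f_2\le f_1$) for all $f_i\in f(b_i)$.
   Context: Let $B$ be a one-dimensional standard Brownian motion on a complete probability space $(\Omega,\mathcal F,\mathbb P)$ with augmented natural filtration $(\mathcal F_t)$. Constants $\mu,r\in\mathbb R$, $\sigma>0$, $\phi:=(\mu-r)/\sigma\neq0$; pricing kernel $Z_t=\exp(-\phi B_t-(r+\phi^2/2)t)$. Fix $\tau>0$, $\alpha\in(0,1)$, $k\ge0$, $\gamma>0$, $\delta>0$, and assume $\delta>h:=r\alpha+\frac{\alpha\phi^2}{2(1-\alpha)}$. $U(x)=x^\alpha$ for $x\ge0$, $U(x)=-k|x|^\alpha$ for $x<0$. $\mathcal Y$ is the set of $\mathcal F_\tau$-measurable $Y\ge0$ with $\mathbb E[Z_\tau Y]\le1$. $F(y;\theta):=U(y-\gamma)+\theta y^\alpha$, $\Phi(\theta):=\sup_{Y\in\mathcal Y}\mathbb E[F(Y;\theta)]$. For $\kappa\in[0,1]$, $\theta^*(\kappa)$ is the unique fixed point of the contraction $\theta\mapsto e^{-\delta\tau}\Phi(\kappa\theta)$ (it does not depend on $\beta$). For $\beta\in[0,1]$ and $\xi\in[0,e^{h\tau}]$,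 $G(\xi;\beta):=\{\mathbb E[Y^\alpha]:Y\in\arg\max_{Y\in\mathcal Y}\mathbb E[F(Y;\kappa\theta^*(\kappa))]\}$ with $\kappa=\beta/(1-(1-\beta)e^{-\delta\tau}\xi)$. *)

theory Defs
  imports "HOL-Probability.Probability"
begin

definition brownian_motion :: "'a measure \<Rightarrow> (real \<Rightarrow> 'a \<Rightarrow> real) \<Rightarrow> bool" where
  "brownian_motion M B \<longleftrightarrow>
     prob_space M \<and>
     (\<forall>t\<ge>0. B t \<in> borel_measurable M) \<and>
     (AE \<omega> in M. B 0 \<omega> = 0) \<and>
     (AE \<omega> in M. continuous_on {0..} (\<lambda>t. B t \<omega>)) \<and>
     (\<forall>s t. 0 \<le> s \<and> s < t \<longrightarrow>
        distributed M lborel (\<lambda>\<omega>. B t \<omega> - B s \<omega>) (\<lambda>x. ennreal (normal_density 0 (sqrt (t - s)) x))) \<and>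
     (\<forall>(ts :: nat \<Rightarrow> real) n. 0 \<le> ts 0 \<and> (\<forall>i<n. ts i \<le> ts (Suc i)) \<longrightarrow>
        prob_space.indep_vars M (\<lambda>_. borel) (\<lambda>i \<omega>. B (ts (Suc i)) \<omega> - B (ts i) \<omega>) {..<n})"

definition aug_nat_filtr :: "'a measure \<Rightarrow> (real \<Rightarrow> 'a \<Rightarrow> real) \<Rightarrow> real \<Rightarrow> 'a measure" where
  "aug_nat_filtr M B t = sigma (space M)
     ({B s -` A \<inter> space M | s A. 0 \<le> s \<and> s \<le> t \<and> A \<in> sets borel} \<union> null_sets M)"

definition pricing_kernel :: "(real \<Rightarrow> 'a \<Rightarrow> real) \<Rightarrow> real \<Rightarrow> real \<Rightarrow> real \<Rightarrow> 'a \<Rightarrow> real" where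
  "pricing_kernel B \<phi> r t \<omega> = exp (- \<phi> * B t \<omega> - (r + \<phi>\<^sup>2 / 2) * t)"

definition Uf :: "real \<Rightarrow> real \<Rightarrow> real \<Rightarrow> real" where
  "Uf \<alpha> k x = (if x \<ge> 0 then x powr \<alpha> else - k * \<bar>x\<bar> powr \<alpha>)"

definition admissible :: "'a measure \<Rightarrow> (real \<Rightarrow> 'a \<Rightarrow> real) \<Rightarrow> real \<Rightarrow> real \<Rightarrow> real \<Rightarrow> ('a \<Rightarrow> real) set" where
  "admissible M B \<phi> r \<tau> = {Y. Y \<in> borel_measurable (aug_nat_filtr M B \<tau>) \<and>
       (\<forall>\<omega>\<in>space M. 0 \<le> Y \<omega>) \<and>
       (\<integral>\<^sup>+ \<omega>. ennreal (pricing_kernel B \<phi> r \<tau> \<omega> * Y \<omega>) \<partial>M) \<le> 1}"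

definition Fobj :: "real \<Rightarrow> real \<Rightarrow> real \<Rightarrow> real \<Rightarrow> real \<Rightarrow> real" where
  "Fobj \<alpha> k \<gamma> \<theta> y = Uf \<alpha> k (y - \<gamma>) + \<theta> * y powr \<alpha>"

definition Phi :: "'a measure \<Rightarrow> (real \<Rightarrow> 'a \<Rightarrow> real) \<Rightarrow> real \<Rightarrow> real \<Rightarrow> real \<Rightarrow> real \<Rightarrow> real \<Rightarrow> real \<Rightarrow> real \<Rightarrow> real" where
  "Phi M B \<phi> r \<tau> \<alpha> k \<gamma> \<theta> =
     (SUP Y \<in> admissible M B \<phi> r \<tau>. (\<integral>\<omega>. Fobj \<alpha> k \<gamma> \<theta> (Y \<omega>) \<partial>M))"

definition theta_star :: "'a measure \<Rightarrow> (real \<Rightarrow> 'a \<Rightarrow> real) \<Rightarrow> real \<Rightarrow> real \<Rightarrow> real \<Rightarrow> real \<Rightarrow> real \<Rightarrow> real \<Rightarrow> real \<Rightarrow> real \<Rightarrow> real" where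
  "theta_star M B \<phi> r \<tau> \<alpha> k \<gamma> \<delta> \<kappa> =
     (THE \<theta>. \<theta> = exp (- \<delta> * \<tau>) * Phi M B \<phi> r \<tau> \<alpha> k \<gamma> (\<kappa> * \<theta>))"

definition argmax_set :: "'a measure \<Rightarrow> (real \<Rightarrow> 'a \<Rightarrow> real) \<Rightarrow> real \<Rightarrow> real \<Rightarrow> real \<Rightarrow> real \<Rightarrow> real \<Rightarrow> real \<Rightarrow> real \<Rightarrow> ('a \<Rightarrow> real) set" where
  "argmax_set M B \<phi> r \<tau> \<alpha> k \<gamma> \<theta> =
     {Y \<in> admissible M B \<phi> r \<tau>.
        \<forall>Y' \<in> admissible M B \<phi> r \<tau>. (\<integral>\<omega>. Fobj \<alpha> k \<gamma> \<theta> (Y' \<omega>) \<partial>M) \<le> (\<integral>\<omega>. Fobj \<alpha> k \<gamma> \<theta> (Y \<omega>) \<partial>M)}"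

definition Gset :: "'a measure \<Rightarrow> (real \<Rightarrow> 'a \<Rightarrow> real) \<Rightarrow> real \<Rightarrow> real \<Rightarrow> real \<Rightarrow> real \<Rightarrow> real \<Rightarrow> real \<Rightarrow> real \<Rightarrow> real \<Rightarrow> real \<Rightarrow> real set" where
  "Gset M B \<phi> r \<tau> \<alpha> k \<gamma> \<delta> \<xi> \<beta> =
     (let \<kappa> = \<beta> / (1 - (1 - \<beta>) * exp (- \<delta> * \<tau>) * \<xi>) in
      (\<lambda>Y. \<integral>\<omega>. Y \<omega> powr \<alpha> \<partial>M) ` argmax_set M B \<phi> r \<tau> \<alpha> k \<gamma> (\<kappa> * theta_star M B \<phi> r \<tau> \<alpha> k \<gamma> \<delta> \<kappa>))"

end

theory Submission
  imports Defs
begin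

text \<open>
  Write \<open>u Y = E[U(Y - \<gamma>)]\<close> and \<open>m Y = E[Y^\<alpha>]\<close>, so that \<open>E[F(Y;\<theta>)] = u Y + \<theta> m Y\<close>.
  Young's inequality against the pricing kernel gives \<open>0 \<le> m Y \<le> exp (h \<tau>)\<close> on the admissible
  set, hence \<open>\<Phi> \<theta> = sup (u + \<theta> m)\<close> is non-decreasing and \<open>exp (h \<tau>)\<close>-Lipschitz, and
  \<open>\<psi> = exp (-\<delta> \<tau>) \<Phi>\<close> is a monotone contraction because \<open>\<delta> > h\<close>. For the fixed points
  \<open>\<theta>*(\<kappa>) = \<psi> (\<kappa> \<theta>*(\<kappa>))\<close> the product \<open>\<kappa> \<theta>*(\<kappa>)\<close> is strictly increasing in \<open>\<kappa>\<close> when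
  \<open>\<theta>*(0) = \<psi> 0 > 0\<close>, and strictly decreasing when \<open>\<theta>*(0) < 0\<close>. Since \<open>\<kappa>\<close> is strictly
  increasing in \<open>\<beta>\<close>, and adding the two optimality inequalities shows that \<open>m\<close> is
  non-decreasing along maximisers of \<open>u + \<theta> m\<close> as \<open>\<theta>\<close> grows, the claim follows.
\<close>

lemma bdd_above_affine_image:
  fixes u m :: "'b \<Rightarrow> real"
  assumes "bdd_above (u ` A)" and "\<And>Y. Y \<in> A \<Longrightarrow> 0 \<le> m Y \<and> m Y \<le> S"
  shows "bdd_above ((\<lambda>Y. u Y + \<theta> * m Y) ` A)"
proof -
  obtain U where U: "\<And>Y. Y \<in> A \<Longrightarrow> u Y \<le> U"
    using assms(1) by (auto simp: bdd_above_def)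
  have "u Y + \<theta> * m Y \<le> U + \<bar>\<theta>\<bar> * S" if "Y \<in> A" for Y
  proof -
    have "\<theta> * m Y \<le> \<bar>\<theta>\<bar> * m Y" using assms(2)[OF that] by (intro mult_right_mono) auto
    also have "\<dots> \<le> \<bar>\<theta>\<bar> * S" using assms(2)[OF that] by (intro mult_left_mono) auto
    finally show ?thesis using U[OF that] by linarith
  qed
  then show ?thesis by (intro bdd_aboveI2)
qed

lemma SUP_affine_le_shift:
  fixes u m :: "'b \<Rightarrow> real"
  assumes "A \<noteq> {}" "bdd_above (u ` A)" and "\<And>Y. Y \<in> A \<Longrightarrow> 0 \<le> m Y \<and> m Y \<le> S"
  shows "(SUP Y\<in>A. u Y + a * m Y) \<le> (SUP Y\<in>A. u Y + b * m Y) + S * \<bar>a - b\<bar>"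
proof (rule cSUP_least[OF assms(1)])
  fix Y assume Y: "Y \<in> A"
  have "(a - b) * m Y \<le> \<bar>a - b\<bar> * m Y" using assms(3)[OF Y] by (intro mult_right_mono) auto
  also have "\<dots> \<le> \<bar>a - b\<bar> * S" using assms(3)[OF Y] by (intro mult_left_mono) auto
  finally have "u Y + a * m Y \<le> (u Y + b * m Y) + S * \<bar>a - b\<bar>" by (simp add: algebra_simps)
  also have "u Y + b * m Y \<le> (SUP Y\<in>A. u Y + b * m Y)"
    using Y bdd_above_affine_image[OF assms(2,3)] by (rule cSUP_upper)
  finally show "u Y + a * m Y \<le> (SUP Y\<in>A. u Y + b * m Y) + S * \<bar>a - b\<bar>" by simp
qed

lemma lipschitz_SUP_affine:
  fixes u m :: "'b \<Rightarrow> real"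
  assumes "A \<noteq> {}" "bdd_above (u ` A)" and "\<And>Y. Y \<in> A \<Longrightarrow> 0 \<le> m Y \<and> m Y \<le> S"
  shows "\<bar>(SUP Y\<in>A. u Y + a * m Y) - (SUP Y\<in>A. u Y + b * m Y)\<bar> \<le> S * \<bar>a - b\<bar>"
proof -
  have "(SUP Y\<in>A. u Y + a * m Y) \<le> (SUP Y\<in>A. u Y + b * m Y) + S * \<bar>a - b\<bar>"
    by (rule SUP_affine_le_shift) (use assms in auto)
  moreover have "(SUP Y\<in>A. u Y + b * m Y) \<le> (SUP Y\<in>A. u Y + a * m Y) + S * \<bar>b - a\<bar>"
    by (rule SUP_affine_le_shift) (use assms in auto)
  ultimately show ?thesis by (simp add: abs_minus_commute abs_le_iff)
qed

lemma mono_SUP_affine: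
  fixes u m :: "'b \<Rightarrow> real"
  assumes "A \<noteq> {}" "bdd_above (u ` A)" and "\<And>Y. Y \<in> A \<Longrightarrow> 0 \<le> m Y \<and> m Y \<le> S"
  shows "mono (\<lambda>\<theta>. SUP Y\<in>A. u Y + \<theta> * m Y)"
proof (rule monoI, rule cSUP_mono[OF assms(1)])
  fix a b :: real and Y assume "a \<le> b" "Y \<in> A"
  then show "\<exists>Y'\<in>A. u Y + a * m Y \<le> u Y' + b * m Y'"
    using assms(3) by (auto intro!: bexI[of _ Y] mult_right_mono)
qed (rule bdd_above_affine_image[OF assms(2,3)])

lemma argmax_affine_mono:
  fixes u m :: "'b \<Rightarrow> real"
  assumes "\<theta>1 < \<theta>2"
    and "Y1 \<in> A" "\<And>Y. Y \<in> A \<Longrightarrow> u Y + \<theta>1 * m Y \<le> u Y1 + \<theta>1 * m Y1"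
    and "Y2 \<in> A" "\<And>Y. Y \<in> A \<Longrightarrow> u Y + \<theta>2 * m Y \<le> u Y2 + \<theta>2 * m Y2"
  shows "m Y1 \<le> m Y2"
proof -
  have "u Y2 + \<theta>1 * m Y2 \<le> u Y1 + \<theta>1 * m Y1" "u Y1 + \<theta>2 * m Y1 \<le> u Y2 + \<theta>2 * m Y2"
    using assms by auto
  then have "(\<theta>2 - \<theta>1) * (m Y1 - m Y2) \<le> 0" by (simp add: algebra_simps)
  then show ?thesis using assms(1) by (simp add: mult_le_0_iff)
qed

lemma scaled_fixed_point_ex1:
  fixes \<psi> :: "real \<Rightarrow> real"
  assumes lip: "\<And>x y. \<bar>\<psi> x - \<psi> y\<bar> \<le> L * \<bar>x - y\<bar>" and "L < 1" and "\<bar>\<kappa>\<bar> \<le> 1"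
  shows "\<exists>!\<theta>. \<theta> = \<psi> (\<kappa> * \<theta>)"
proof -
  have L: "0 \<le> L" using order_trans[OF abs_ge_zero lip[of 1 0]] by simp
  have "\<exists>!\<theta>. \<psi> (\<kappa> * \<theta>) = \<theta>"
  proof (rule banach_fix_type[of "L * \<bar>\<kappa>\<bar>"])
    show "0 \<le> L * \<bar>\<kappa>\<bar>" using L by simp
    show "L * \<bar>\<kappa>\<bar> < 1" using L assms(2,3) mult_left_le[of "\<bar>\<kappa>\<bar>" L] by linarith
    show "\<forall>x y. dist (\<psi> (\<kappa> * x)) (\<psi> (\<kappa> * y)) \<le> L * \<bar>\<kappa>\<bar> * dist x y"
    proof (intro allI)
      fix x y
      show "dist (\<psi> (\<kappa> * x)) (\<psi> (\<kappa> * y)) \<le> L * \<bar>\<kappa>\<bar> * dist x y"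
        using lip[of "\<kappa> * x" "\<kappa> * y"]
        by (simp add: dist_real_def abs_mult mult.assoc flip: right_diff_distrib)
    qed
  qed
  then show ?thesis by metis
qed

lemma scaled_fixed_point_pos:
  fixes \<psi> :: "real \<Rightarrow> real"
  assumes lip: "\<And>x y. \<bar>\<psi> x - \<psi> y\<bar> \<le> L * \<bar>x - y\<bar>" and "L < 1"
    and fp: "t = \<psi> (\<kappa> * t)" and "0 \<le> \<kappa>" "\<kappa> \<le> 1" and "\<psi> 0 > 0"
  shows "t > 0"
proof (rule ccontr)
  assume "\<not> t > 0"
  then have t: "t \<le> 0" by simp
  have "\<psi> 0 - \<psi> (\<kappa> * t) \<le> L * (\<kappa> * - t)"
    using lip[of 0 "\<kappa> * t"] t assms(4) by (simp add: abs_mult)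
  moreover have "L * (\<kappa> * - t) \<le> 1 * (\<kappa> * - t)"
    using assms(2,4) t by (intro mult_right_mono) (auto simp: mult_nonneg_nonpos)
  moreover have "\<kappa> * - t \<le> - t"
    using assms(4,5) t by (intro mult_left_le_one_le) auto
  ultimately show False using fp assms(6) by linarith
qed

text \<open>If \<open>\<kappa>\<^sub>2 t\<^sub>2 \<le> \<kappa>\<^sub>1 t\<^sub>1\<close>, monotonicity gives \<open>t\<^sub>2 \<le> t\<^sub>1\<close>, and then, since \<open>t\<^sub>1 > 0\<close>,
  \<open>\<kappa>\<^sub>1 t\<^sub>1 - \<kappa>\<^sub>2 t\<^sub>2 < t\<^sub>1 - t\<^sub>2 \<le> L (\<kappa>\<^sub>1 t\<^sub>1 - \<kappa>\<^sub>2 t\<^sub>2)\<close>, impossible for \<open>L < 1\<close>.\<close>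

lemma scaled_fixed_point_strict_mono:
  fixes \<psi> t :: "real \<Rightarrow> real"
  assumes "mono \<psi>" and lip: "\<And>x y. \<bar>\<psi> x - \<psi> y\<bar> \<le> L * \<bar>x - y\<bar>" and "L < 1"
    and fp: "\<And>\<kappa>. 0 \<le> \<kappa> \<Longrightarrow> \<kappa> \<le> 1 \<Longrightarrow> t \<kappa> = \<psi> (\<kappa> * t \<kappa>)" and "\<psi> 0 > 0"
    and \<kappa>: "0 \<le> \<kappa>1" "\<kappa>1 < \<kappa>2" "\<kappa>2 \<le> 1"
  shows "\<kappa>1 * t \<kappa>1 < \<kappa>2 * t \<kappa>2"
proof (rule ccontr)
  assume "\<not> ?thesis"
  then have le: "\<kappa>2 * t \<kappa>2 \<le> \<kappa>1 * t \<kappa>1" by simp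
  have fp1: "t \<kappa>1 = \<psi> (\<kappa>1 * t \<kappa>1)" and fp2: "t \<kappa>2 = \<psi> (\<kappa>2 * t \<kappa>2)"
    using fp \<kappa> by auto
  have "t \<kappa>1 > 0"
    using scaled_fixed_point_pos[OF lip assms(3) fp1] \<kappa> assms(5) by simp
  then have "\<kappa>1 * t \<kappa>1 < \<kappa>2 * t \<kappa>1" using \<kappa> by simp
  moreover have "t \<kappa>2 \<le> t \<kappa>1"
    using monoD[OF assms(1) le] fp1 fp2 by simp
  then have "\<kappa>2 * (t \<kappa>1 - t \<kappa>2) \<le> t \<kappa>1 - t \<kappa>2"
    using \<kappa> by (intro mult_left_le_one_le) auto
  moreover have "t \<kappa>1 - t \<kappa>2 \<le> L * (\<kappa>1 * t \<kappa>1 - \<kappa>2 * t \<kappa>2)"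
    using lip[of "\<kappa>1 * t \<kappa>1" "\<kappa>2 * t \<kappa>2"] le fp1 fp2 by simp
  moreover have "L * (\<kappa>1 * t \<kappa>1 - \<kappa>2 * t \<kappa>2) \<le> \<kappa>1 * t \<kappa>1 - \<kappa>2 * t \<kappa>2"
    using le assms(3) mult_right_mono[of L 1 "\<kappa>1 * t \<kappa>1 - \<kappa>2 * t \<kappa>2"] by simp
  ultimately show False by (simp add: algebra_simps)
qed

lemma scaled_fixed_point_strict_antimono:
  fixes \<psi> t :: "real \<Rightarrow> real"
  assumes "mono \<psi>" and lip: "\<And>x y. \<bar>\<psi> x - \<psi> y\<bar> \<le> L * \<bar>x - y\<bar>" and "L < 1"
    and fp: "\<And>\<kappa>. 0 \<le> \<kappa> \<Longrightarrow> \<kappa> \<le> 1 \<Longrightarrow> t \<kappa> = \<psi> (\<kappa> * t \<kappa>)" and "\<psi> 0 < 0"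
    and \<kappa>: "0 \<le> \<kappa>1" "\<kappa>1 < \<kappa>2" "\<kappa>2 \<le> 1"
  shows "\<kappa>2 * t \<kappa>2 < \<kappa>1 * t \<kappa>1"
proof -
  have "\<kappa>1 * - t \<kappa>1 < \<kappa>2 * - t \<kappa>2"
  proof (rule scaled_fixed_point_strict_mono[of "\<lambda>x. - \<psi> (- x)" L])
    show "mono (\<lambda>x. - \<psi> (- x))" using monoD[OF assms(1)] by (intro monoI) simp
    show "\<bar>- \<psi> (- x) - - \<psi> (- y)\<bar> \<le> L * \<bar>x - y\<bar>" for x y
      using lip[of "- x" "- y"] by (simp add: abs_minus_commute)
    show "- t \<kappa> = - \<psi> (- (\<kappa> * - t \<kappa>))" if "0 \<le> \<kappa>" "\<kappa> \<le> 1" for \<kappa>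
      using fp[OF that] by simp
  qed (use assms in auto)
  then show ?thesis by simp
qed

lemma beta_to_kappa_bounds:
  fixes c \<beta> :: real
  assumes "0 \<le> c" "c < 1" "0 \<le> \<beta>" "\<beta> \<le> 1"
  shows "0 \<le> \<beta> / (1 - (1 - \<beta>) * c)" "\<beta> / (1 - (1 - \<beta>) * c) \<le> 1"
proof -
  have "(1 - \<beta>) * c \<le> 1 - \<beta>" "(1 - \<beta>) * c < 1"
    using assms mult_left_le[of c "1 - \<beta>"] mult_right_mono[of "1 - \<beta>" 1 c] by auto
  then show "0 \<le> \<beta> / (1 - (1 - \<beta>) * c)" "\<beta> / (1 - (1 - \<beta>) * c) \<le> 1"
    using assms by auto
qed

lemma beta_to_kappa_strict_mono:
  fixes c \<beta>1 \<beta>2 :: real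
  assumes "0 \<le> c" "c < 1" "0 \<le> \<beta>1" "\<beta>1 < \<beta>2" "\<beta>2 \<le> 1"
  shows "\<beta>1 / (1 - (1 - \<beta>1) * c) < \<beta>2 / (1 - (1 - \<beta>2) * c)"
proof -
  have D: "0 < 1 - (1 - \<beta>) * c" if "0 \<le> \<beta>" "\<beta> \<le> 1" for \<beta>
    using that assms(1,2) mult_right_mono[of "1 - \<beta>" 1 c] by auto
  have "\<beta>1 * (1 - (1 - \<beta>2) * c) - \<beta>2 * (1 - (1 - \<beta>1) * c) = (\<beta>1 - \<beta>2) * (1 - c)"
    by (simp add: algebra_simps)
  also have "\<dots> < 0" using assms by (simp add: mult_neg_pos)
  finally show ?thesis using D[of \<beta>1] D[of \<beta>2] assms by (simp add: divide_simps)
qed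

lemma powr_le_Young_dual:
  fixes \<alpha> w y :: real
  assumes "0 < \<alpha>" "\<alpha> < 1" "0 < w" "0 \<le> y"
  shows "y powr \<alpha> \<le> \<alpha> * (w * y) + (1 - \<alpha>) * w powr (- \<alpha> / (1 - \<alpha>))"
proof (cases "y = 0")
  case True
  then show ?thesis using assms by simp
next
  case False
  then have y: "0 < y" using assms(4) by simp
  have "(w powr (- \<alpha> / (1 - \<alpha>))) powr (1 - \<alpha>) = w powr (- \<alpha>)"
    using assms by (simp add: powr_powr)
  moreover have "(w * y) powr \<alpha> = w powr \<alpha> * y powr \<alpha>"
    using assms y by (simp add: powr_mult)
  moreover have "w powr \<alpha> * w powr (- \<alpha>) = 1"
    using assms by (simp flip: powr_add)
  ultimately have "y powr \<alpha> = (w * y) powr \<alpha> * (w powr (- \<alpha> / (1 - \<alpha>))) powr (1 - \<alpha>)"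
    by (simp add: mult.commute mult.left_commute)
  also have "\<dots> \<le> \<alpha> * (w * y) + (1 - \<alpha>) * w powr (- \<alpha> / (1 - \<alpha>))"
    using assms y by (intro Youngs_inequality_0) auto
  finally show ?thesis .
qed

lemma nn_integral_normal_density_exp:
  fixes s a :: real
  assumes s: "0 < s"
  shows "(\<integral>\<^sup>+x. ennreal (normal_density 0 s x) * ennreal (exp (a * x)) \<partial>lborel)
    = ennreal (exp (a\<^sup>2 * s\<^sup>2 / 2))"
proof -
  have completed_square:
    "normal_density 0 s x * exp (a * x) = exp (a\<^sup>2 * s\<^sup>2 / 2) * normal_density (a * s\<^sup>2) s x" for x
  proof -
    have "- (x - 0)\<^sup>2 / (2 * s\<^sup>2) + a * x = a\<^sup>2 * s\<^sup>2 / 2 + (- (x - a * s\<^sup>2)\<^sup>2 / (2 * s\<^sup>2))"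
      using s by (simp add: field_simps power2_eq_square)
    then show ?thesis unfolding normal_density_def
      by (simp add: mult_exp_exp mult.assoc mult.left_commute[of "exp _"])
  qed
  have "(\<integral>\<^sup>+x. ennreal (normal_density 0 s x) * ennreal (exp (a * x)) \<partial>lborel)
      = (\<integral>\<^sup>+x. ennreal (exp (a\<^sup>2 * s\<^sup>2 / 2)) * ennreal (normal_density (a * s\<^sup>2) s x) \<partial>lborel)"
    by (intro nn_integral_cong) (simp add: completed_square flip: ennreal_mult)
  also have "\<dots> = ennreal (exp (a\<^sup>2 * s\<^sup>2 / 2)) * (\<integral>\<^sup>+x. ennreal (normal_density (a * s\<^sup>2) s x) \<partial>lborel)"
    by (rule nn_integral_cmult) simp
  also have "(\<integral>\<^sup>+x. ennreal (normal_density (a * s\<^sup>2) s x) \<partial>lborel) = 1"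
    using integrable_normal_density[OF s] integral_normal_density[OF s]
    by (subst nn_integral_eq_integral) auto
  finally show ?thesis by simp
qed

lemma brownian_motion_exp_moment:
  assumes BM: "brownian_motion M B" and t: "0 < t"
  shows "(\<integral>\<^sup>+\<omega>. ennreal (exp (a * B t \<omega>)) \<partial>M) = ennreal (exp (a\<^sup>2 * t / 2))"
proof -
  have "distributed M lborel (\<lambda>\<omega>. B t \<omega> - B 0 \<omega>) (\<lambda>x. ennreal (normal_density 0 (sqrt (t - 0)) x))"
    using BM t unfolding brownian_motion_def by (metis order_refl)
  then have increment:
    "distributed M lborel (\<lambda>\<omega>. B t \<omega> - B 0 \<omega>) (\<lambda>x. ennreal (normal_density 0 (sqrt t) x))"
    by simp
  have "AE \<omega> in M. B 0 \<omega> = 0" using BM unfolding brownian_motion_def by auto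
  then have "(\<integral>\<^sup>+\<omega>. ennreal (exp (a * B t \<omega>)) \<partial>M) = (\<integral>\<^sup>+\<omega>. ennreal (exp (a * (B t \<omega> - B 0 \<omega>))) \<partial>M)"
    by (intro nn_integral_cong_AE) auto
  also have "\<dots> = (\<integral>\<^sup>+x. ennreal (normal_density 0 (sqrt t) x) * ennreal (exp (a * x)) \<partial>lborel)"
    using distributed_nn_integral[OF increment, of "\<lambda>x. ennreal (exp (a * x))"] by simp
  also have "\<dots> = ennreal (exp (a\<^sup>2 * t / 2))"
    using t by (simp add: nn_integral_normal_density_exp)
  finally show ?thesis .
qed

lemma subalgebra_aug_nat_filtr:
  assumes "\<And>t. 0 \<le> t \<Longrightarrow> B t \<in> borel_measurable M"
  shows "subalgebra M (aug_nat_filtr M B \<tau>)"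
proof -
  let ?G = "{B s -` A \<inter> space M | s A. 0 \<le> s \<and> s \<le> \<tau> \<and> A \<in> sets borel} \<union> null_sets M"
  have G: "?G \<subseteq> sets M" using assms by (auto intro: measurable_sets)
  moreover have "?G \<subseteq> Pow (space M)" using G sets.sets_into_space by blast
  ultimately show ?thesis
    unfolding subalgebra_def aug_nat_filtr_def
    by (simp add: space_measure_of_conv sets_measure_of sets.sigma_sets_subset)
qed

lemma admissible_measurable:
  assumes "brownian_motion M B" and "Y \<in> admissible M B \<phi> r \<tau>"
  shows "Y \<in> borel_measurable M"
  using assms measurable_from_subalg[OF subalgebra_aug_nat_filtr]
  unfolding brownian_motion_def admissible_def by blast

lemma zero_admissible: "(\<lambda>_. 0) \<in> admissible M B \<phi> r \<tau>"
  unfolding admissible_def by simp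

lemma Uf_shift_le_powr:
  assumes "0 \<le> y" "0 \<le> \<alpha>" "0 \<le> k" "0 \<le> \<gamma>"
  shows "Uf \<alpha> k (y - \<gamma>) \<le> y powr \<alpha>"
proof (cases "\<gamma> \<le> y")
  case True
  then show ?thesis using assms by (simp add: Uf_def powr_mono2)
next
  case False
  then show ?thesis using assms by (simp add: Uf_def order_trans[OF _ powr_ge_zero])
qed

lemma abs_Uf_shift_le:
  assumes "0 \<le> y" "0 \<le> \<alpha>" "0 \<le> k" "0 \<le> \<gamma>"
  shows "\<bar>Uf \<alpha> k (y - \<gamma>)\<bar> \<le> k * \<gamma> powr \<alpha> + y powr \<alpha>"
proof (cases "\<gamma> \<le> y")
  case True
  have "(y - \<gamma>) powr \<alpha> \<le> y powr \<alpha>" using True assms by (intro powr_mono2) auto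
  then show ?thesis using True assms by (simp add: Uf_def add_increasing)
next
  case False
  have "\<bar>y - \<gamma>\<bar> powr \<alpha> \<le> \<gamma> powr \<alpha>" using False assms by (intro powr_mono2) auto
  then have "k * \<bar>y - \<gamma>\<bar> powr \<alpha> \<le> k * \<gamma> powr \<alpha>" using assms(3) by (rule mult_left_mono)
  then show ?thesis using False assms by (simp add: Uf_def abs_mult add_increasing2)
qed

definition expected_power :: "'a measure \<Rightarrow> real \<Rightarrow> ('a \<Rightarrow> real) \<Rightarrow> real" where
  "expected_power M \<alpha> Y = (\<integral>\<omega>. Y \<omega> powr \<alpha> \<partial>M)"

definition expected_utility :: "'a measure \<Rightarrow> real \<Rightarrow> real \<Rightarrow> real \<Rightarrow> ('a \<Rightarrow> real) \<Rightarrow> real" where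
  "expected_utility M \<alpha> k \<gamma> Y = (\<integral>\<omega>. Uf \<alpha> k (Y \<omega> - \<gamma>) \<partial>M)"

locale investment_model =
  fixes M :: "'a measure" and B :: "real \<Rightarrow> 'a \<Rightarrow> real" and \<phi> r \<tau> \<alpha> k \<gamma> :: real
  assumes BM: "brownian_motion M B" and \<tau>: "0 < \<tau>" and \<alpha>: "0 < \<alpha>" "\<alpha> < 1"
    and k: "0 \<le> k" and \<gamma>: "0 < \<gamma>"
begin

sublocale prob_space M
  using BM unfolding brownian_motion_def by simp

lemma B_measurable[measurable]: "B \<tau> \<in> borel_measurable M"
  using BM \<tau> unfolding brownian_motion_def by simp

abbreviation h :: real where
  "h \<equiv> r * \<alpha> + \<alpha> * \<phi>\<^sup>2 / (2 * (1 - \<alpha>))"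

text \<open>\<open>c = exp (h \<tau>)\<close> is the scale with \<open>E[(c Z)^(-\<alpha>/(1-\<alpha>))] = c\<close>; with it the Young bound
  \<open>Y^\<alpha> \<le> \<alpha> c Z Y + (1 - \<alpha>) (c Z)^(-\<alpha>/(1-\<alpha>))\<close> and the budget \<open>E[Z Y] \<le> 1\<close> give exactly
  \<open>E[Y^\<alpha>] \<le> c\<close>.\<close>

lemma nn_integral_scaled_pricing_kernel_powr:
  "(\<integral>\<^sup>+\<omega>. ennreal ((exp (h * \<tau>) * pricing_kernel B \<phi> r \<tau> \<omega>) powr (- \<alpha> / (1 - \<alpha>))) \<partial>M)
    = ennreal (exp (h * \<tau>))"
proof -
  define p where "p = \<alpha> / (1 - \<alpha>)"
  have exponent: "p * (r + \<phi>\<^sup>2 / 2 - h) + (p * \<phi>)\<^sup>2 / 2 = h"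
  proof -
    define q where "q = 1 - \<alpha>"
    have q: "0 < q" "1 - \<alpha> = q" "\<alpha> = 1 - q" using \<alpha> unfolding q_def by auto
    show ?thesis unfolding p_def q(2) unfolding q(3) using q(1) by (simp add: field_simps power2_eq_square)
  qed
  have pointwise: "(exp (h * \<tau>) * pricing_kernel B \<phi> r \<tau> \<omega>) powr (- \<alpha> / (1 - \<alpha>))
      = exp (p * (r + \<phi>\<^sup>2 / 2 - h) * \<tau>) * exp ((p * \<phi>) * B \<tau> \<omega>)" for \<omega>
    unfolding pricing_kernel_def powr_def p_def by (simp add: mult_exp_exp algebra_simps)
  have "(\<integral>\<^sup>+\<omega>. ennreal ((exp (h * \<tau>) * pricing_kernel B \<phi> r \<tau> \<omega>) powr (- \<alpha> / (1 - \<alpha>))) \<partial>M)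
      = ennreal (exp (p * (r + \<phi>\<^sup>2 / 2 - h) * \<tau>)) * (\<integral>\<^sup>+\<omega>. ennreal (exp ((p * \<phi>) * B \<tau> \<omega>)) \<partial>M)"
    unfolding pointwise by (simp add: ennreal_mult nn_integral_cmult)
  also have "\<dots> = ennreal (exp ((p * (r + \<phi>\<^sup>2 / 2 - h) + (p * \<phi>)\<^sup>2 / 2) * \<tau>))"
    using brownian_motion_exp_moment[OF BM \<tau>]
    by (simp add: mult_exp_exp distrib_right flip: ennreal_mult)
  finally show ?thesis unfolding exponent .
qed

lemma admissible_nn_integral_powr_le:
  assumes Y: "Y \<in> admissible M B \<phi> r \<tau>"
  shows "(\<integral>\<^sup>+\<omega>. ennreal (Y \<omega> powr \<alpha>) \<partial>M) \<le> ennreal (exp (h * \<tau>))"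
proof -
  define c where "c = exp (h * \<tau>)"
  define Z where "Z = pricing_kernel B \<phi> r \<tau>"
  have [measurable]: "Y \<in> borel_measurable M" by (rule admissible_measurable[OF BM Y])
  have [measurable]: "Z \<in> borel_measurable M" unfolding Z_def pricing_kernel_def[abs_def] by measurable
  have Z: "0 < Z \<omega>" for \<omega> unfolding Z_def pricing_kernel_def by simp
  have Y0: "0 \<le> Y \<omega>" if "\<omega> \<in> space M" for \<omega> using Y that unfolding admissible_def by auto
  have budget: "(\<integral>\<^sup>+\<omega>. ennreal (Z \<omega> * Y \<omega>) \<partial>M) \<le> 1" using Y unfolding admissible_def Z_def by auto
  have "(\<integral>\<^sup>+\<omega>. ennreal (Y \<omega> powr \<alpha>) \<partial>M)
      \<le> (\<integral>\<^sup>+\<omega>. ennreal (\<alpha> * c) * ennreal (Z \<omega> * Y \<omega>)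
             + ennreal (1 - \<alpha>) * ennreal ((c * Z \<omega>) powr (- \<alpha> / (1 - \<alpha>))) \<partial>M)"
  proof (rule nn_integral_mono)
    fix \<omega> assume "\<omega> \<in> space M"
    then have "Y \<omega> powr \<alpha> \<le> \<alpha> * c * (Z \<omega> * Y \<omega>) + (1 - \<alpha>) * (c * Z \<omega>) powr (- \<alpha> / (1 - \<alpha>))"
      using powr_le_Young_dual[OF \<alpha>, of "c * Z \<omega>" "Y \<omega>"] Z[of \<omega>] Y0 unfolding c_def
      by (simp add: mult.assoc)
    then show "ennreal (Y \<omega> powr \<alpha>) \<le> ennreal (\<alpha> * c) * ennreal (Z \<omega> * Y \<omega>)
        + ennreal (1 - \<alpha>) * ennreal ((c * Z \<omega>) powr (- \<alpha> / (1 - \<alpha>)))"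
      using \<alpha> Z[of \<omega>] Y0 \<open>\<omega> \<in> space M\<close> unfolding c_def
      by (simp flip: ennreal_mult ennreal_plus)
  qed
  also have "\<dots> = ennreal (\<alpha> * c) * (\<integral>\<^sup>+\<omega>. ennreal (Z \<omega> * Y \<omega>) \<partial>M)
      + ennreal (1 - \<alpha>) * (\<integral>\<^sup>+\<omega>. ennreal ((c * Z \<omega>) powr (- \<alpha> / (1 - \<alpha>))) \<partial>M)"
    by (simp add: nn_integral_add nn_integral_cmult)
  also have "\<dots> \<le> ennreal (\<alpha> * c) * 1 + ennreal (1 - \<alpha>) * ennreal c"
    using nn_integral_scaled_pricing_kernel_powr budget unfolding c_def Z_def
    by (intro add_mono mult_left_mono) auto
  also have "\<dots> = ennreal c"
    using \<alpha> by (simp add: c_def algebra_simps flip: ennreal_mult ennreal_plus)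
  finally show ?thesis unfolding c_def .
qed

lemma admissible_integrable_powr:
  assumes Y: "Y \<in> admissible M B \<phi> r \<tau>"
  shows "integrable M (\<lambda>\<omega>. Y \<omega> powr \<alpha>)"
proof (rule integrableI_bounded)
  show "(\<lambda>\<omega>. Y \<omega> powr \<alpha>) \<in> borel_measurable M"
    using admissible_measurable[OF BM Y] by measurable
  show "(\<integral>\<^sup>+\<omega>. ennreal (norm (Y \<omega> powr \<alpha>)) \<partial>M) < \<infinity>"
    using admissible_nn_integral_powr_le[OF Y] by (simp add: le_less_trans)
qed

lemma admissible_expected_power_bounds:
  assumes Y: "Y \<in> admissible M B \<phi> r \<tau>"
  shows "0 \<le> expected_power M \<alpha> Y" "expected_power M \<alpha> Y \<le> exp (h * \<tau>)"
proof -
  show "0 \<le> expected_power M \<alpha> Y" unfolding expected_power_def by simp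
  have "expected_power M \<alpha> Y = enn2real (\<integral>\<^sup>+\<omega>. ennreal (Y \<omega> powr \<alpha>) \<partial>M)"
    unfolding expected_power_def using admissible_measurable[OF BM Y]
    by (intro integral_eq_nn_integral) auto
  also have "\<dots> \<le> exp (h * \<tau>)"
    using admissible_nn_integral_powr_le[OF Y] by (intro enn2real_leI) auto
  finally show "expected_power M \<alpha> Y \<le> exp (h * \<tau>)" .
qed

lemma admissible_integrable_utility:
  assumes Y: "Y \<in> admissible M B \<phi> r \<tau>"
  shows "integrable M (\<lambda>\<omega>. Uf \<alpha> k (Y \<omega> - \<gamma>))"
proof (rule Bochner_Integration.integrable_bound)
  show "integrable M (\<lambda>\<omega>. k * \<gamma> powr \<alpha> + Y \<omega> powr \<alpha>)"
    using admissible_integrable_powr[OF Y] by simp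
  show "(\<lambda>\<omega>. Uf \<alpha> k (Y \<omega> - \<gamma>)) \<in> borel_measurable M"
    using admissible_measurable[OF BM Y] unfolding Uf_def by measurable
  show "AE \<omega> in M. norm (Uf \<alpha> k (Y \<omega> - \<gamma>)) \<le> norm (k * \<gamma> powr \<alpha> + Y \<omega> powr \<alpha>)"
    using Y abs_Uf_shift_le \<alpha> k \<gamma> unfolding admissible_def by (intro AE_I2) auto
qed

lemma admissible_expected_utility_le:
  assumes Y: "Y \<in> admissible M B \<phi> r \<tau>"
  shows "expected_utility M \<alpha> k \<gamma> Y \<le> expected_power M \<alpha> Y"
  unfolding expected_utility_def expected_power_def
  using Y Uf_shift_le_powr \<alpha> k \<gamma> admissible_integrable_utility[OF Y] admissible_integrable_powr[OF Y]
  unfolding admissible_def by (intro integral_mono) auto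

lemma admissible_expected_Fobj:
  assumes Y: "Y \<in> admissible M B \<phi> r \<tau>"
  shows "(\<integral>\<omega>. Fobj \<alpha> k \<gamma> \<theta> (Y \<omega>) \<partial>M) = expected_utility M \<alpha> k \<gamma> Y + \<theta> * expected_power M \<alpha> Y"
  unfolding Fobj_def expected_utility_def expected_power_def
  using admissible_integrable_utility[OF Y] admissible_integrable_powr[OF Y] by simp

lemma Phi_eq_SUP:
  "Phi M B \<phi> r \<tau> \<alpha> k \<gamma> \<theta>
    = (SUP Y\<in>admissible M B \<phi> r \<tau>. expected_utility M \<alpha> k \<gamma> Y + \<theta> * expected_power M \<alpha> Y)"
  unfolding Phi_def by (intro SUP_cong) (simp_all add: admissible_expected_Fobj)

lemma bdd_above_expected_utility:
  "bdd_above (expected_utility M \<alpha> k \<gamma> ` admissible M B \<phi> r \<tau>)"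
  using admissible_expected_utility_le admissible_expected_power_bounds
  by (intro bdd_aboveI2[where M = "exp (h * \<tau>)"]) (blast intro: order_trans)

lemma mono_Phi: "mono (Phi M B \<phi> r \<tau> \<alpha> k \<gamma>)"
  unfolding Phi_eq_SUP[abs_def]
  using zero_admissible bdd_above_expected_utility admissible_expected_power_bounds
  by (intro mono_SUP_affine) blast+

lemma Phi_lipschitz:
  "\<bar>Phi M B \<phi> r \<tau> \<alpha> k \<gamma> a - Phi M B \<phi> r \<tau> \<alpha> k \<gamma> b\<bar> \<le> exp (h * \<tau>) * \<bar>a - b\<bar>"
  unfolding Phi_eq_SUP
  using zero_admissible bdd_above_expected_utility admissible_expected_power_bounds
  by (intro lipschitz_SUP_affine) blast+

lemma discounted_Phi_contraction:
  assumes "h < \<delta>"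
  shows "mono (\<lambda>x. exp (- \<delta> * \<tau>) * Phi M B \<phi> r \<tau> \<alpha> k \<gamma> x)"
    and "\<bar>exp (- \<delta> * \<tau>) * Phi M B \<phi> r \<tau> \<alpha> k \<gamma> a - exp (- \<delta> * \<tau>) * Phi M B \<phi> r \<tau> \<alpha> k \<gamma> b\<bar>
      \<le> exp ((h - \<delta>) * \<tau>) * \<bar>a - b\<bar>"
    and "exp ((h - \<delta>) * \<tau>) < 1"
proof -
  let ?\<Phi> = "Phi M B \<phi> r \<tau> \<alpha> k \<gamma>"
  show "mono (\<lambda>x. exp (- \<delta> * \<tau>) * ?\<Phi> x)" using mono_Phi by (simp add: mono_def mult_left_mono)
  have "\<bar>exp (- \<delta> * \<tau>) * ?\<Phi> a - exp (- \<delta> * \<tau>) * ?\<Phi> b\<bar> = exp (- \<delta> * \<tau>) * \<bar>?\<Phi> a - ?\<Phi> b\<bar>"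
    by (simp add: abs_mult flip: right_diff_distrib)
  also have "\<dots> \<le> exp (- \<delta> * \<tau>) * (exp (h * \<tau>) * \<bar>a - b\<bar>)"
    using Phi_lipschitz by (rule mult_left_mono) simp
  also have "\<dots> = exp ((h - \<delta>) * \<tau>) * \<bar>a - b\<bar>"
    by (simp add: mult_exp_exp algebra_simps)
  finally show "\<bar>exp (- \<delta> * \<tau>) * ?\<Phi> a - exp (- \<delta> * \<tau>) * ?\<Phi> b\<bar> \<le> exp ((h - \<delta>) * \<tau>) * \<bar>a - b\<bar>" .
  show "exp ((h - \<delta>) * \<tau>) < 1" using assms \<tau> by (simp add: mult_neg_pos)
qed

lemma theta_star_fixed_point:
  assumes "h < \<delta>" "0 \<le> \<kappa>" "\<kappa> \<le> 1"
  shows "theta_star M B \<phi> r \<tau> \<alpha> k \<gamma> \<delta> \<kappa>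
    = exp (- \<delta> * \<tau>) * Phi M B \<phi> r \<tau> \<alpha> k \<gamma> (\<kappa> * theta_star M B \<phi> r \<tau> \<alpha> k \<gamma> \<delta> \<kappa>)"
  unfolding theta_star_def
proof (rule theI')
  show "\<exists>!\<theta>. \<theta> = exp (- \<delta> * \<tau>) * Phi M B \<phi> r \<tau> \<alpha> k \<gamma> (\<kappa> * \<theta>)"
    using discounted_Phi_contraction(2,3)[OF assms(1)] assms(2,3)
    by (intro scaled_fixed_point_ex1[where \<psi> = "\<lambda>x. exp (- \<delta> * \<tau>) * Phi M B \<phi> r \<tau> \<alpha> k \<gamma> x"
          and L = "exp ((h - \<delta>) * \<tau>)"]) auto
qed

lemma scaled_theta_star_strict_mono:
  assumes "h < \<delta>" "0 < theta_star M B \<phi> r \<tau> \<alpha> k \<gamma> \<delta> 0" "0 \<le> \<kappa>1" "\<kappa>1 < \<kappa>2" "\<kappa>2 \<le> 1"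
  shows "\<kappa>1 * theta_star M B \<phi> r \<tau> \<alpha> k \<gamma> \<delta> \<kappa>1 < \<kappa>2 * theta_star M B \<phi> r \<tau> \<alpha> k \<gamma> \<delta> \<kappa>2"
  by (rule scaled_fixed_point_strict_mono[OF discounted_Phi_contraction[OF assms(1)]])
    (use theta_star_fixed_point[OF assms(1)] assms theta_star_fixed_point[OF assms(1), of 0] in auto)

lemma scaled_theta_star_strict_antimono:
  assumes "h < \<delta>" "theta_star M B \<phi> r \<tau> \<alpha> k \<gamma> \<delta> 0 < 0" "0 \<le> \<kappa>1" "\<kappa>1 < \<kappa>2" "\<kappa>2 \<le> 1"
  shows "\<kappa>2 * theta_star M B \<phi> r \<tau> \<alpha> k \<gamma> \<delta> \<kappa>2 < \<kappa>1 * theta_star M B \<phi> r \<tau> \<alpha> k \<gamma> \<delta> \<kappa>1"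
  by (rule scaled_fixed_point_strict_antimono[OF discounted_Phi_contraction[OF assms(1)]])
    (use theta_star_fixed_point[OF assms(1)] assms theta_star_fixed_point[OF assms(1), of 0] in auto)

lemma beta_to_kappa_props:
  fixes \<delta> \<xi> :: real
  defines "\<kappa> \<beta> \<equiv> \<beta> / (1 - (1 - \<beta>) * exp (- \<delta> * \<tau>) * \<xi>)"
  assumes "h < \<delta>" "0 \<le> \<xi>" "\<xi> \<le> exp (h * \<tau>)" and \<beta>: "0 \<le> \<beta>1" "\<beta>1 < \<beta>2" "\<beta>2 \<le> 1"
  shows "0 \<le> \<kappa> \<beta>1" "\<kappa> \<beta>1 < \<kappa> \<beta>2" "\<kappa> \<beta>2 \<le> 1"
proof -
  have "exp (- \<delta> * \<tau>) * \<xi> \<le> exp (- \<delta> * \<tau>) * exp (h * \<tau>)"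
    using assms(4) by (rule mult_left_mono) simp
  also have "\<dots> = exp ((h - \<delta>) * \<tau>)" by (simp add: mult_exp_exp algebra_simps)
  finally have "exp (- \<delta> * \<tau>) * \<xi> \<le> exp ((h - \<delta>) * \<tau>)" .
  then have c: "0 \<le> exp (- \<delta> * \<tau>) * \<xi>" "exp (- \<delta> * \<tau>) * \<xi> < 1"
    using assms(3) discounted_Phi_contraction(3)[OF assms(2)] by (simp, linarith)
  from beta_to_kappa_bounds[OF c] beta_to_kappa_strict_mono[OF c \<beta>] \<beta>
  show "0 \<le> \<kappa> \<beta>1" "\<kappa> \<beta>1 < \<kappa> \<beta>2" "\<kappa> \<beta>2 \<le> 1" unfolding \<kappa>_def by (simp_all add: mult.assoc)
qed

lemma argmax_set_expected_power_mono:
  assumes "\<theta>1 < \<theta>2" "Y1 \<in> argmax_set M B \<phi> r \<tau> \<alpha> k \<gamma> \<theta>1" "Y2 \<in> argmax_set M B \<phi> r \<tau> \<alpha> k \<gamma> \<theta>2"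
  shows "expected_power M \<alpha> Y1 \<le> expected_power M \<alpha> Y2"
proof (rule argmax_affine_mono[where u = "expected_utility M \<alpha> k \<gamma>" and m = "expected_power M \<alpha>"
      and A = "admissible M B \<phi> r \<tau>"])
  show "Y1 \<in> admissible M B \<phi> r \<tau>" "Y2 \<in> admissible M B \<phi> r \<tau>"
    using assms(2,3) unfolding argmax_set_def by auto
  show "expected_utility M \<alpha> k \<gamma> Y + \<theta>1 * expected_power M \<alpha> Y
      \<le> expected_utility M \<alpha> k \<gamma> Y1 + \<theta>1 * expected_power M \<alpha> Y1"
    and "expected_utility M \<alpha> k \<gamma> Y + \<theta>2 * expected_power M \<alpha> Y
      \<le> expected_utility M \<alpha> k \<gamma> Y2 + \<theta>2 * expected_power M \<alpha> Y2"
    if "Y \<in> admissible M B \<phi> r \<tau>" for Y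
    using assms(2,3) that unfolding argmax_set_def by (auto simp: admissible_expected_Fobj)
qed (rule assms(1))

lemma Gset_le_of_scaled_theta_star_less:
  fixes \<delta> \<xi> :: real
  defines "\<kappa> \<beta> \<equiv> \<beta> / (1 - (1 - \<beta>) * exp (- \<delta> * \<tau>) * \<xi>)"
  assumes "\<kappa> \<beta>1 * theta_star M B \<phi> r \<tau> \<alpha> k \<gamma> \<delta> (\<kappa> \<beta>1) < \<kappa> \<beta>2 * theta_star M B \<phi> r \<tau> \<alpha> k \<gamma> \<delta> (\<kappa> \<beta>2)"
    and "g1 \<in> Gset M B \<phi> r \<tau> \<alpha> k \<gamma> \<delta> \<xi> \<beta>1" "g2 \<in> Gset M B \<phi> r \<tau> \<alpha> k \<gamma> \<delta> \<xi> \<beta>2"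
  shows "g1 \<le> g2"
  using assms(2-) argmax_set_expected_power_mono
  unfolding Gset_def Let_def \<kappa>_def[symmetric] expected_power_def[symmetric] by blast

end

theorem lemmaA10:
  fixes M :: "'a measure" and B :: "real \<Rightarrow> 'a \<Rightarrow> real"
    and \<mu> r \<sigma> \<tau> \<alpha> k \<gamma> \<delta> \<xi> :: real
  assumes BM: "brownian_motion M B"
    and compl: "complete_measure M"
    and \<sigma>_pos: "\<sigma> > 0"
    and \<phi>_nz: "(\<mu> - r) / \<sigma> \<noteq> 0"
    and \<tau>_pos: "\<tau> > 0"
    and \<alpha>: "0 < \<alpha>" "\<alpha> < 1"
    and k: "k \<ge> 0"
    and \<gamma>: "\<gamma> > 0"
    and \<delta>: "\<delta> > 0"
    and \<delta>_h: "\<delta> > r * \<alpha> + \<alpha> * ((\<mu> - r) / \<sigma>)\<^sup>2 / (2 * (1 - \<alpha>))"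
    and \<xi>: "0 \<le> \<xi>" "\<xi> \<le> exp ((r * \<alpha> + \<alpha> * ((\<mu> - r) / \<sigma>)\<^sup>2 / (2 * (1 - \<alpha>))) * \<tau>)"
  shows
    "(theta_star M B ((\<mu> - r) / \<sigma>) r \<tau> \<alpha> k \<gamma> \<delta> 0 > 0 \<longrightarrow>
       (\<forall>\<beta>1 \<beta>2 g1 g2. 0 \<le> \<beta>1 \<and> \<beta>1 < \<beta>2 \<and> \<beta>2 \<le> 1 \<and>
          g1 \<in> Gset M B ((\<mu> - r) / \<sigma>) r \<tau> \<alpha> k \<gamma> \<delta> \<xi> \<beta>1 \<and>
          g2 \<in> Gset M B ((\<mu> - r) / \<sigma>) r \<tau> \<alpha> k \<gamma> \<delta> \<xi> \<beta>2 \<longrightarrow> g1 \<le> g2))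
   \<and> (theta_star M B ((\<mu> - r) / \<sigma>) r \<tau> \<alpha> k \<gamma> \<delta> 0 < 0 \<longrightarrow>
       (\<forall>\<beta>1 \<beta>2 g1 g2. 0 \<le> \<beta>1 \<and> \<beta>1 < \<beta>2 \<and> \<beta>2 \<le> 1 \<and>
          g1 \<in> Gset M B ((\<mu> - r) / \<sigma>) r \<tau> \<alpha> k \<gamma> \<delta> \<xi> \<beta>1 \<and>
          g2 \<in> Gset M B ((\<mu> - r) / \<sigma>) r \<tau> \<alpha> k \<gamma> \<delta> \<xi> \<beta>2 \<longrightarrow> g2 \<le> g1))"
proof -
  interpret investment_model M B "(\<mu> - r) / \<sigma>" r \<tau> \<alpha> k \<gamma>
    using BM \<tau>_pos \<alpha> k \<gamma> by unfold_locales auto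
  note \<kappa> = beta_to_kappa_props[OF \<delta>_h \<xi>]
  show ?thesis
  proof (intro conjI impI allI; elim conjE)
    fix \<beta>1 \<beta>2 g1 g2 :: real
    assume "0 < theta_star M B ((\<mu> - r) / \<sigma>) r \<tau> \<alpha> k \<gamma> \<delta> 0" "0 \<le> \<beta>1" "\<beta>1 < \<beta>2" "\<beta>2 \<le> 1"
      "g1 \<in> Gset M B ((\<mu> - r) / \<sigma>) r \<tau> \<alpha> k \<gamma> \<delta> \<xi> \<beta>1" "g2 \<in> Gset M B ((\<mu> - r) / \<sigma>) r \<tau> \<alpha> k \<gamma> \<delta> \<xi> \<beta>2"
    then show "g1 \<le> g2"
      using Gset_le_of_scaled_theta_star_less scaled_theta_star_strict_mono[OF \<delta>_h] \<kappa> by meson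
  next
    fix \<beta>1 \<beta>2 g1 g2 :: real
    assume "theta_star M B ((\<mu> - r) / \<sigma>) r \<tau> \<alpha> k \<gamma> \<delta> 0 < 0" "0 \<le> \<beta>1" "\<beta>1 < \<beta>2" "\<beta>2 \<le> 1"
      "g1 \<in> Gset M B ((\<mu> - r) / \<sigma>) r \<tau> \<alpha> k \<gamma> \<delta> \<xi> \<beta>1" "g2 \<in> Gset M B ((\<mu> - r) / \<sigma>) r \<tau> \<alpha> k \<gamma> \<delta> \<xi> \<beta>2"
    then show "g2 \<le> g1"
      using Gset_le_of_scaled_theta_star_less scaled_theta_star_strict_antimono[OF \<delta>_h] \<kappa> by meson
  qed
qed

end
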